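(* Let $-\infty\le a<b\le\infty$, let $f,g$ be differentiable on $(a,b)$ with $g'\ne0$ on $(a,b)$, and suppose $\lim_{x\to b^-}f(x)=\lim_{x\to b^-}g(x)=0$. Let $H_{f,g}=\frac{f'}{g'}g-f$ and $H_{f,g}(a^+)=\lim_{x\to a^+}H_{f,g}(x)\in[-\infty,\infty]$. (A) Suppose there is $c\in(a,b)$ such that $f'/g'$ is strictly increasing on $(a,c)$ and strictly decreasing on $(c,b)$. Then: (i) if either $g'>0$ and $H_{f,g}(a^+)\le0$, or $g'<0$ and $H_{f,g}(a^+)\ge0$, then $f/g$ is strictly decreasing on $(a,b)$; (ii) if either $g'>0$ and $H_{f,g}(a^+)>0$, or $g'<0$ and $H_{f,g}(a^+)<0$, then there is a unique $x_b\in(a,b)$ such that $f/g$ is strictly increasing on $(a,x_b)$ and strictly decreasing on $(x_b,b)$. (B) Suppose there is $c\in(a,b)$ such that $f'/g'$ is strictly decreasing on $(a,c)$ and strictly increasing on $(c,b)$. Then: (i) if either $g'>0$ and $H_{f,g}(a^+)\ge0$, or $g'<0$ and $H_{f,g}(a^+)\le0$, then $f/g$ is strictly increasing on $(a,b)$; (ii) if either $g'>0$ and $H_{f,g}(a^+)<0$, or $g'<0$ and $H_{f,g}(a^+)>0$, then there is a unique $x_b\in(a,b)$ such that $f/g$ is strictly decreasing on $(a,x_b)$ and strictly increasing on $(x_b,b)$.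
   Context: $H_{f,g}(x)=\frac{f'(x)}{g'(x)}g(x)-f(x)$ for $x\in(a,b)$, defined for differentiable $f,g$ with $g'\ne0$ on $(a,b)$. *)

theory Defs
  imports "HOL-Analysis.Analysis"
begin

definition eivl :: "ereal \<Rightarrow> ereal \<Rightarrow> real set" where
  "eivl a b = {x. a < ereal x \<and> ereal x < b}"

definition at_left_e :: "ereal \<Rightarrow> real filter" where
  "at_left_e b = (if b = \<infinity> then at_top else at_left (real_of_ereal b))"

definition at_right_e :: "ereal \<Rightarrow> real filter" where
  "at_right_e a = (if a = -\<infinity> then at_bot else at_right (real_of_ereal a))"

definition H :: "(real \<Rightarrow> real) \<Rightarrow> (real \<Rightarrow> real) \<Rightarrow> real \<Rightarrow> real" where
  "H f g x = deriv f x / deriv g x * g x - f x"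

end

theory Submission
  imports Defs
begin

(*
  Set r = f'/g' and H = r g - f, and suppose g' > 0.  Since g increases to 0, g < 0 on (a,b).
  The Cauchy mean value theorem gives, for x < y, some x < xi < y with
      H y - H x = (r y - r xi) g y + (r xi - r x) g x,
  so H strictly decreases where r increases (left of c) and strictly increases where r
  decreases (right of c).  Right of c, letting y -> b in f y - f x <= r x (g y - g x) shows
  H <= 0, hence H < 0 there.  As (f/g)' = g' H / g^2 has the sign of H, f/g decreases if
  H(a+) <= 0, and if H(a+) > 0 then H changes sign exactly once, at the peak of f/g.

  The case g' < 0 follows by passing to (-f,-g), part (B) by
  passing to (-f,g), and the main theorem instantiates the derivatives with deriv f, deriv g.
*)

lemma is_interval_eivl: "is_interval (eivl a b)"
proof -
  have "a < ereal z \<and> ereal z < b" if "a < ereal x" "ereal y < b" "x \<le> z" "z \<le> y" for x y z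
    using that by (metis ereal_less_eq(3) le_less_trans less_le_trans)
  then show ?thesis unfolding is_interval_1 eivl_def by blast
qed

lemma eivl_left_subset: "c \<in> eivl a b \<Longrightarrow> eivl a (ereal c) \<subseteq> eivl a b"
  unfolding eivl_def using less_trans[of "ereal _" "ereal c" b] by auto

lemma eivl_right_subset: "c \<in> eivl a b \<Longrightarrow> eivl (ereal c) b \<subseteq> eivl a b"
  unfolding eivl_def by (auto intro: less_trans)

lemma at_left_e_nontrivial: "at_left_e b \<noteq> bot"
  by (simp add: at_left_e_def)

lemma at_right_e_nontrivial: "at_right_e a \<noteq> bot"
  by (simp add: at_right_e_def)

lemma eventually_at_left_e_eivl:
  assumes "x \<in> eivl a b"
  shows "eventually (\<lambda>y. y \<in> eivl a b \<and> x < y) (at_left_e b)"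
proof (cases b)
  case (real B)
  with assms have "x < B" by (simp add: eivl_def)
  from eventually_at_left_real[OF this] show ?thesis
    using real assms unfolding at_left_e_def
    by (auto simp: eivl_def elim!: eventually_mono intro: less_trans)
next
  case PInf
  have "a < ereal y \<and> x < y" if "x < y" for y
    using that assms less_trans[of a "ereal x" "ereal y"] by (simp add: eivl_def)
  then show ?thesis using PInf unfolding at_left_e_def
    by (auto simp: eivl_def intro: eventually_mono[OF eventually_gt_at_top])
next
  case MInf
  with assms show ?thesis by (simp add: eivl_def)
qed

lemma eventually_at_right_e_eivl:
  assumes "x \<in> eivl a b"
  shows "eventually (\<lambda>y. y \<in> eivl a b \<and> y < x) (at_right_e a)"
proof (cases a)
  case (real A)
  with assms have "A < x" by (simp add: eivl_def)
  have "ereal y < b" if "y < x" for y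
    using that assms less_trans[of "ereal y" "ereal x" b] by (simp add: eivl_def)
  with eventually_at_right_real[OF \<open>A < x\<close>] show ?thesis
    using real unfolding at_right_e_def by (auto simp: eivl_def elim!: eventually_mono)
next
  case MInf
  have "ereal y < b \<and> y < x" if "y < x" for y
    using that assms less_trans[of "ereal y" "ereal x" b] by (simp add: eivl_def)
  then show ?thesis using MInf unfolding at_right_e_def
    by (auto simp: eivl_def intro: eventually_mono[OF eventually_gt_at_bot])
next
  case PInf
  with assms show ?thesis by (simp add: eivl_def)
qed

lemma strict_mono_on_uminus_iff:
  "strict_mono_on A (\<lambda>x. - h x) \<longleftrightarrow> strict_antimono_on A (h :: 'a :: order \<Rightarrow> real)"
  by (simp add: monotone_on_def)

lemma strict_antimono_on_uminus_iff:
  "strict_antimono_on A (\<lambda>x. - h x) \<longleftrightarrow> strict_mono_on A (h :: 'a :: order \<Rightarrow> real)"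
  by (simp add: monotone_on_def)

text \<open>A function on an interval whose derivative is positive except possibly at one point
  \<open>e\<close> is strictly increasing (split at \<open>e\<close> and use the mean value theorem on each side).\<close>
lemma strict_mono_on_if_deriv_pos:
  fixes h d :: "real \<Rightarrow> real"
  assumes I: "is_interval I"
    and deriv: "\<And>x. x \<in> I \<Longrightarrow> (h has_real_derivative d x) (at x)"
    and pos: "\<And>x. x \<in> I \<Longrightarrow> x \<noteq> e \<Longrightarrow> 0 < d x"
  shows "strict_mono_on I h"
proof (rule monotone_onI)
  fix p q assume pq: "p \<in> I" "q \<in> I" "p < q"
  have sub: "{p..q} \<subseteq> I"
    using I pq unfolding is_interval_1 by (meson atLeastAtMost_iff subsetI)
  have piece: "h u < h v" if uv: "p \<le> u" "u < v" "v \<le> q" and e: "e \<notin> {u<..<v}" for u v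
  proof (rule DERIV_pos_imp_increasing_open[OF \<open>u < v\<close>])
    fix t assume "u < t" "t < v"
    with uv e sub have "t \<in> I" "t \<noteq> e" by auto
    with deriv pos show "\<exists>y. DERIV h t :> y \<and> y > 0" by blast
  next
    have "{u..v} \<subseteq> I" using uv sub by auto
    then have "\<And>t. t \<in> {u..v} \<Longrightarrow> isCont h t" using deriv DERIV_isCont by blast
    then show "continuous_on {u..v} h" by (rule continuous_at_imp_continuous_on[OF ballI])
  qed
  show "h p < h q"
  proof (cases "e \<in> {p<..<q}")
    case True
    then have "h p < h e" "h e < h q" using piece[of p e] piece[of e q] by auto
    then show ?thesis by simp
  next
    case False
    then show ?thesis using piece[of p q] pq by simp
  qed
qed

lemma strict_antimono_on_if_deriv_neg:
  fixes h d :: "real \<Rightarrow> real"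
  assumes "is_interval I"
    and "\<And>x. x \<in> I \<Longrightarrow> (h has_real_derivative d x) (at x)"
    and "\<And>x. x \<in> I \<Longrightarrow> x \<noteq> e \<Longrightarrow> d x < 0"
  shows "strict_antimono_on I h"
proof -
  have "strict_mono_on I (\<lambda>x. - h x)"
    using assms by (intro strict_mono_on_if_deriv_pos[where d = "\<lambda>x. - d x" and e = e])
      (auto intro: DERIV_minus)
  then show ?thesis by (simp add: strict_mono_on_uminus_iff)
qed

text \<open>A function on \<open>(a,b)\<close> has at most one peak: if it increased on \<open>(a,v)\<close> and decreased on
  \<open>(u,b)\<close> with \<open>u < v\<close>, it would both increase and decrease on \<open>(u,v)\<close>.\<close>
lemma unimodal_peak_unique:
  fixes \<phi> :: "real \<Rightarrow> real"
  assumes "x \<in> eivl a b" "y \<in> eivl a b"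
    and "strict_mono_on (eivl a (ereal x)) \<phi>" "strict_antimono_on (eivl (ereal x) b) \<phi>"
    and "strict_mono_on (eivl a (ereal y)) \<phi>" "strict_antimono_on (eivl (ereal y) b) \<phi>"
  shows "x = y"
proof -
  have False if uv: "u \<in> eivl a b" "v \<in> eivl a b" "u < v"
    and mono: "strict_mono_on (eivl a (ereal v)) \<phi>"
    and antimono: "strict_antimono_on (eivl (ereal u) b) \<phi>" for u v
  proof -
    define m1 where "m1 = u + (v - u) / 3"
    define m2 where "m2 = u + 2 * (v - u) / 3"
    have m: "u < m1" "m1 < m2" "m2 < v" using \<open>u < v\<close> by (auto simp: m1_def m2_def field_simps)
    have "m1 \<in> eivl a b" "m2 \<in> eivl a b"
      using is_interval_eivl uv m unfolding is_interval_1 by (meson less_imp_le order.strict_trans)+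
    with m have "m1 \<in> eivl a (ereal v)" "m2 \<in> eivl a (ereal v)"
      "m1 \<in> eivl (ereal u) b" "m2 \<in> eivl (ereal u) b"
      by (auto simp: eivl_def)
    then have "\<phi> m1 < \<phi> m2" "\<phi> m2 < \<phi> m1"
      using mono antimono m(2) by (auto simp: monotone_on_def)
    then show False by simp
  qed
  with assms show ?thesis by (metis linorder_neqE)
qed

locale unimodal_ratio =
  fixes a b :: ereal and f g f' g' :: "real \<Rightarrow> real" and c :: real
  assumes f_deriv: "\<And>x. x \<in> eivl a b \<Longrightarrow> (f has_real_derivative f' x) (at x)"
    and g_deriv: "\<And>x. x \<in> eivl a b \<Longrightarrow> (g has_real_derivative g' x) (at x)"
    and g'_pos: "\<And>x. x \<in> eivl a b \<Longrightarrow> 0 < g' x"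
    and f_lim: "(f \<longlongrightarrow> 0) (at_left_e b)"
    and g_lim: "(g \<longlongrightarrow> 0) (at_left_e b)"
    and c_in: "c \<in> eivl a b"
    and r_mono: "strict_mono_on (eivl a (ereal c)) (\<lambda>x. f' x / g' x)"
    and r_antimono: "strict_antimono_on (eivl (ereal c) b) (\<lambda>x. f' x / g' x)"
begin

definition r :: "real \<Rightarrow> real" where "r x = f' x / g' x"

definition Hfg :: "real \<Rightarrow> real" where "Hfg x = r x * g x - f x"

lemma between: "x \<in> eivl a b \<Longrightarrow> y \<in> eivl a b \<Longrightarrow> x \<le> z \<Longrightarrow> z \<le> y \<Longrightarrow> z \<in> eivl a b"
  using is_interval_eivl unfolding is_interval_1 by blast

lemma r_less_left: "x \<in> eivl a b \<Longrightarrow> y \<in> eivl a b \<Longrightarrow> x < y \<Longrightarrow> y < c \<Longrightarrow> r x < r y"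
  using r_mono unfolding r_def monotone_on_def eivl_def by auto

lemma r_less_right: "x \<in> eivl a b \<Longrightarrow> y \<in> eivl a b \<Longrightarrow> c < x \<Longrightarrow> x < y \<Longrightarrow> r y < r x"
  using r_antimono unfolding r_def monotone_on_def eivl_def by auto

lemma cauchy_mvt:
  assumes "x \<in> eivl a b" "y \<in> eivl a b" "x < y"
  obtains \<xi> where "x < \<xi>" "\<xi> < y" "f y - f x = r \<xi> * (g y - g x)"
proof -
  have inside: "z \<in> eivl a b" if "x \<le> z" "z \<le> y" for z
    using between[OF assms(1,2) that] .
  have "\<exists>\<xi>. x < \<xi> \<and> \<xi> < y \<and> (f y - f x) * g' \<xi> = (g y - g x) * f' \<xi>"
  proof (rule GMVT'[OF \<open>x < y\<close>])
    fix z assume "x \<le> z" "z \<le> y"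
    then have "z \<in> eivl a b" by (rule inside)
    then show "isCont f z" "isCont g z" using f_deriv g_deriv DERIV_isCont by blast+
  next
    fix z assume "x < z" "z < y"
    then have "z \<in> eivl a b" by (intro inside less_imp_le)
    then show "(g has_real_derivative g' z) (at z)" "(f has_real_derivative f' z) (at z)"
      using f_deriv g_deriv by blast+
  qed
  then obtain \<xi> where \<xi>: "x < \<xi>" "\<xi> < y" "(f y - f x) * g' \<xi> = (g y - g x) * f' \<xi>"
    by blast
  have "\<xi> \<in> eivl a b" using \<xi>(1,2) by (intro inside less_imp_le)
  then have "g' \<xi> \<noteq> 0" using g'_pos by force
  with \<xi>(3) have "f y - f x = r \<xi> * (g y - g x)" by (simp add: r_def field_simps)
  with \<xi>(1,2) show ?thesis by (rule that)
qed

text \<open>\<open>g\<close> increases towards its limit \<open>0\<close> at \<open>b\<close>, hence is negative on \<open>(a,b)\<close>.\<close>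
lemma g_strict_mono: "strict_mono_on (eivl a b) g"
  using g_deriv g'_pos by (intro strict_mono_on_if_deriv_pos[OF is_interval_eivl, where d = g' and e = c]) auto

lemma g_neg:
  assumes x: "x \<in> eivl a b" shows "g x < 0"
proof -
  obtain y where y: "y \<in> eivl a b" "x < y"
    using eventually_happens'[OF at_left_e_nontrivial eventually_at_left_e_eivl[OF x]] by blast
  have "eventually (\<lambda>z. g y \<le> g z) (at_left_e b)"
    using eventually_at_left_e_eivl[OF y(1)]
    by (rule eventually_mono) (use g_strict_mono y in \<open>auto simp: monotone_on_def intro: less_imp_le\<close>)
  then have "g y \<le> 0" using tendsto_le[OF at_left_e_nontrivial g_lim tendsto_const] by blast
  moreover have "g x < g y" using g_strict_mono x y by (simp add: monotone_on_def)
  ultimately show ?thesis by simp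
qed

lemma H_increment:
  assumes "x \<in> eivl a b" "y \<in> eivl a b" "x < y"
  obtains \<xi> where "x < \<xi>" "\<xi> < y" "Hfg y - Hfg x = (r y - r \<xi>) * g y + (r \<xi> - r x) * g x"
proof -
  obtain \<xi> where \<xi>: "x < \<xi>" "\<xi> < y" "f y - f x = r \<xi> * (g y - g x)"
    using cauchy_mvt[OF assms] .
  then have "Hfg y - Hfg x = (r y - r \<xi>) * g y + (r \<xi> - r x) * g x"
    unfolding Hfg_def by (simp add: algebra_simps)
  with \<xi>(1,2) show ?thesis by (rule that)
qed

lemma H_decreasing_left:
  assumes xy: "x \<in> eivl a b" "y \<in> eivl a b" "x < y" "y < c"
  shows "Hfg y < Hfg x"
proof -
  obtain \<xi> where \<xi>: "x < \<xi>" "\<xi> < y" and eq: "Hfg y - Hfg x = (r y - r \<xi>) * g y + (r \<xi> - r x) * g x"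
    using H_increment[OF xy(1-3)] .
  have \<xi>_in: "\<xi> \<in> eivl a b" using between[OF xy(1,2)] \<xi> by simp
  have "0 < r y - r \<xi>" "0 < r \<xi> - r x"
    using r_less_left[OF \<xi>_in xy(2) \<xi>(2) xy(4)] r_less_left[OF xy(1) \<xi>_in \<xi>(1)] \<xi>(2) xy(4) by auto
  then have "(r y - r \<xi>) * g y < 0" "(r \<xi> - r x) * g x < 0"
    using g_neg xy(1,2) by (simp_all add: mult_pos_neg)
  with eq show ?thesis by linarith
qed

lemma H_increasing_right:
  assumes xy: "x \<in> eivl a b" "y \<in> eivl a b" "c < x" "x < y"
  shows "Hfg x < Hfg y"
proof -
  obtain \<xi> where \<xi>: "x < \<xi>" "\<xi> < y" and eq: "Hfg y - Hfg x = (r y - r \<xi>) * g y + (r \<xi> - r x) * g x"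
    using H_increment[OF xy(1,2,4)] .
  have \<xi>_in: "\<xi> \<in> eivl a b" using between[OF xy(1,2)] \<xi> by simp
  have "r y - r \<xi> < 0" "r \<xi> - r x < 0"
    using r_less_right[OF \<xi>_in xy(2) _ \<xi>(2)] r_less_right[OF xy(1) \<xi>_in xy(3) \<xi>(1)] \<xi>(1) xy(3) by auto
  then have "0 < (r y - r \<xi>) * g y" "0 < (r \<xi> - r x) * g x"
    using g_neg xy(1,2) by (simp_all add: mult_neg_neg)
  with eq show ?thesis by linarith
qed

text \<open>Beyond \<open>c\<close> the limits of \<open>f\<close> and \<open>g\<close> at \<open>b\<close> force \<open>H\<close> to be non-positive:
  for \<open>x < y\<close> the mean value theorem gives \<open>f y - f x \<le> r x * (g y - g x)\<close>, and
  letting \<open>y \<rightarrow> b\<close> yields \<open>- f x \<le> - r x * g x\<close>.\<close>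
lemma H_nonpos_right:
  assumes x: "x \<in> eivl a b" "c < x"
  shows "Hfg x \<le> 0"
proof -
  have "eventually (\<lambda>y. f y - f x \<le> r x * (g y - g x)) (at_left_e b)"
    using eventually_at_left_e_eivl[OF x(1)]
  proof (rule eventually_mono)
    fix y assume y: "y \<in> eivl a b \<and> x < y"
    obtain \<eta> where \<eta>: "x < \<eta>" "\<eta> < y" "f y - f x = r \<eta> * (g y - g x)"
      using cauchy_mvt x(1) y by blast
    have "\<eta> \<in> eivl a b" using between[of x y \<eta>] x y \<eta> by simp
    then have "r \<eta> < r x" using r_less_right x \<eta>(1) by blast
    moreover have "0 < g y - g x" using g_strict_mono x y by (simp add: monotone_on_def)
    ultimately show "f y - f x \<le> r x * (g y - g x)" using \<eta>(3) by (simp add: mult_right_mono)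
  qed
  moreover have "((\<lambda>y. f y - f x) \<longlongrightarrow> 0 - f x) (at_left_e b)"
    and "((\<lambda>y. r x * (g y - g x)) \<longlongrightarrow> r x * (0 - g x)) (at_left_e b)"
    by (intro tendsto_intros f_lim g_lim)+
  ultimately have "0 - f x \<le> r x * (0 - g x)"
    using tendsto_le[OF at_left_e_nontrivial] by blast
  then show ?thesis by (simp add: Hfg_def)
qed

text \<open>Since \<open>H\<close> increases on \<open>(c,b)\<close> and is non-positive there, it is negative there.\<close>
lemma H_neg_right:
  assumes x: "x \<in> eivl a b" "c < x"
  shows "Hfg x < 0"
proof -
  obtain y where y: "y \<in> eivl a b" "x < y"
    using eventually_happens'[OF at_left_e_nontrivial eventually_at_left_e_eivl[OF x(1)]] by blast
  have "Hfg x < Hfg y" using H_increasing_right x y by blast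
  also have "\<dots> \<le> 0" using H_nonpos_right y x by simp
  finally show ?thesis .
qed

lemma ratio_deriv:
  assumes x: "x \<in> eivl a b"
  shows "((\<lambda>x. f x / g x) has_real_derivative g' x * Hfg x / (g x)\<^sup>2) (at x)"
proof -
  have "g x \<noteq> 0" "g' x \<noteq> 0" using g_neg[OF x] g'_pos[OF x] by auto
  then have "(f' x * g x - f x * g' x) / (g x * g x) = g' x * Hfg x / (g x)\<^sup>2"
    by (simp add: Hfg_def r_def field_simps power2_eq_square)
  with DERIV_divide[OF f_deriv[OF x] g_deriv[OF x] \<open>g x \<noteq> 0\<close>] show ?thesis by simp
qed

lemma ratio_strict_mono_on:
  assumes "is_interval J" "J \<subseteq> eivl a b" "\<And>t. t \<in> J \<Longrightarrow> 0 < Hfg t"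
  shows "strict_mono_on J (\<lambda>x. f x / g x)"
proof (rule strict_mono_on_if_deriv_pos[where d = "\<lambda>x. g' x * Hfg x / (g x)\<^sup>2" and e = c])
  fix t assume t: "t \<in> J"
  then have "0 < g' t * Hfg t" using assms g'_pos by auto
  moreover have "g t \<noteq> 0" using g_neg t assms(2) by force
  ultimately show "0 < g' t * Hfg t / (g t)\<^sup>2" by simp
qed (use assms ratio_deriv in auto)

lemma ratio_strict_antimono_on:
  assumes "is_interval J" "J \<subseteq> eivl a b" "\<And>t. t \<in> J \<Longrightarrow> t \<noteq> c \<Longrightarrow> Hfg t < 0"
  shows "strict_antimono_on J (\<lambda>x. f x / g x)"
proof (rule strict_antimono_on_if_deriv_neg[where d = "\<lambda>x. g' x * Hfg x / (g x)\<^sup>2" and e = c])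
  fix t assume t: "t \<in> J" "t \<noteq> c"
  then have "g' t * Hfg t < 0" using assms g'_pos by (auto simp: mult_pos_neg)
  moreover have "g t \<noteq> 0" using g_neg t assms(2) by force
  ultimately show "g' t * Hfg t / (g t)\<^sup>2 < 0" by (simp add: divide_neg_pos)
qed (use assms ratio_deriv in auto)

text \<open>Left of \<open>c\<close>, \<open>H\<close> is strictly decreasing, so it stays strictly below its limit at \<open>a\<close>.\<close>
lemma H_less_limit:
  assumes H_lim: "((\<lambda>x. ereal (Hfg x)) \<longlongrightarrow> Ha) (at_right_e a)"
    and t: "t \<in> eivl a b" "t < c"
  shows "ereal (Hfg t) < Ha"
proof -
  obtain s where s: "s \<in> eivl a b" "s < t"
    using eventually_happens'[OF at_right_e_nontrivial eventually_at_right_e_eivl[OF t(1)]] by blast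
  have "eventually (\<lambda>y. ereal (Hfg s) \<le> ereal (Hfg y)) (at_right_e a)"
    using eventually_at_right_e_eivl[OF s(1)]
    by (rule eventually_mono) (use H_decreasing_left s t in \<open>auto intro: less_imp_le\<close>)
  then have "ereal (Hfg s) \<le> Ha"
    using tendsto_le[OF at_right_e_nontrivial H_lim tendsto_const] by blast
  moreover have "ereal (Hfg t) < ereal (Hfg s)" using H_decreasing_left s t by simp
  ultimately show ?thesis by (rule order.strict_trans2[rotated])
qed

text \<open>Part (A)(i) for \<open>g' > 0\<close>: if \<open>H(a\<^sup>+) \<le> 0\<close> then \<open>H < 0\<close> off \<open>c\<close>, so \<open>f/g\<close> decreases.\<close>
lemma ratio_decreasing:
  assumes "((\<lambda>x. ereal (Hfg x)) \<longlongrightarrow> Ha) (at_right_e a)" "Ha \<le> 0"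
  shows "strict_antimono_on (eivl a b) (\<lambda>x. f x / g x)"
proof (rule ratio_strict_antimono_on[OF is_interval_eivl order_refl])
  fix t assume t: "t \<in> eivl a b" "t \<noteq> c"
  show "Hfg t < 0"
  proof (cases "c < t")
    case True
    then show ?thesis using H_neg_right t by blast
  next
    case False
    then have "ereal (Hfg t) < Ha" using H_less_limit assms(1) t by simp
    then have "ereal (Hfg t) < 0" using assms(2) by (rule order.strict_trans2)
    then show ?thesis by simp
  qed
qed

text \<open>If \<open>H(a\<^sup>+) > 0\<close>, then \<open>H\<close> changes sign exactly once: the crossing point is the
  supremum of the points left of \<open>c\<close> where \<open>H\<close> is positive.\<close>
lemma H_sign_change:
  assumes H_lim: "((\<lambda>x. ereal (Hfg x)) \<longlongrightarrow> Ha) (at_right_e a)" and "0 < Ha"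
  obtains x0 where "x0 \<in> eivl a b"
    "\<And>t. t \<in> eivl a b \<Longrightarrow> t < x0 \<Longrightarrow> 0 < Hfg t"
    "\<And>t. t \<in> eivl a b \<Longrightarrow> x0 < t \<Longrightarrow> t \<noteq> c \<Longrightarrow> Hfg t < 0"
proof -
  define P where "P = {t \<in> eivl a b. t < c \<and> 0 < Hfg t}"
  have "eventually (\<lambda>y. 0 < ereal (Hfg y)) (at_right_e a)"
    using order_tendstoD(1)[OF H_lim \<open>0 < Ha\<close>] .
  then obtain p where p: "p \<in> P"
    using eventually_happens'[OF at_right_e_nontrivial
        eventually_conj[OF _ eventually_at_right_e_eivl[OF c_in]]]
    unfolding P_def by fastforce
  have P_bdd: "bdd_above P" unfolding P_def by (rule bdd_aboveI[of _ c]) auto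
  define x0 where "x0 = Sup P"
  have "x0 \<le> c" unfolding x0_def using p by (intro cSup_least) (auto simp: P_def)
  moreover have "p \<le> x0" unfolding x0_def using cSup_upper[OF p P_bdd] .
  ultimately have x0_in: "x0 \<in> eivl a b" using between[OF _ c_in] p by (auto simp: P_def)
  have not_P: "Hfg t \<le> 0" if "t \<in> eivl a b" "x0 < t" "t < c" for t
    using that cSup_upper[OF _ P_bdd] unfolding P_def x0_def by force
  show ?thesis
  proof (rule that[OF x0_in])
    fix t assume t: "t \<in> eivl a b" "t < x0"
    then obtain q where "q \<in> P" "t < q" using less_cSup_iff[OF _ P_bdd] p x0_def by blast
    then show "0 < Hfg t" using H_decreasing_left[OF t(1)] unfolding P_def by force
  next
    fix t assume t: "t \<in> eivl a b" "x0 < t" "t \<noteq> c"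
    show "Hfg t < 0"
    proof (cases "c < t")
      case True
      then show ?thesis using H_neg_right t(1) by blast
    next
      case False
      define t' where "t' = (x0 + t) / 2"
      have t': "x0 < t'" "t' < t" using t(2) unfolding t'_def by auto
      have t'_in: "t' \<in> eivl a b" using between[OF x0_in t(1)] t' by simp
      have "Hfg t < Hfg t'" using H_decreasing_left[OF t'_in t(1) t'(2)] False t(3) by simp
      also have "\<dots> \<le> 0" using not_P[OF t'_in t'(1)] t' False t(3) by simp
      finally show ?thesis .
    qed
  qed
qed

text \<open>Part (A)(ii) for \<open>g' > 0\<close>: the sign change of \<open>H\<close> is the unique peak of \<open>f/g\<close>.\<close>
lemma ratio_peak:
  assumes "((\<lambda>x. ereal (Hfg x)) \<longlongrightarrow> Ha) (at_right_e a)" "0 < Ha"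
  shows "\<exists>!xb. xb \<in> eivl a b \<and> strict_mono_on (eivl a (ereal xb)) (\<lambda>x. f x / g x)
                  \<and> strict_antimono_on (eivl (ereal xb) b) (\<lambda>x. f x / g x)"
proof -
  obtain x0 where x0: "x0 \<in> eivl a b"
    and pos: "\<And>t. t \<in> eivl a b \<Longrightarrow> t < x0 \<Longrightarrow> 0 < Hfg t"
    and neg: "\<And>t. t \<in> eivl a b \<Longrightarrow> x0 < t \<Longrightarrow> t \<noteq> c \<Longrightarrow> Hfg t < 0"
    using H_sign_change[OF assms] by blast
  have "strict_mono_on (eivl a (ereal x0)) (\<lambda>x. f x / g x)"
    using eivl_left_subset[OF x0] pos
    by (intro ratio_strict_mono_on[OF is_interval_eivl]) (auto simp: eivl_def)
  moreover have "strict_antimono_on (eivl (ereal x0) b) (\<lambda>x. f x / g x)"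
    using eivl_right_subset[OF x0] neg
    by (intro ratio_strict_antimono_on[OF is_interval_eivl]) (auto simp: eivl_def)
  ultimately show ?thesis
    using x0 unimodal_peak_unique[of x0 a b _ "\<lambda>x. f x / g x"] by blast
qed

end

text \<open>The case
  \<open>g' < 0\<close> reduces to \<open>g' > 0\<close> by passing to \<open>(-f, -g)\<close>, which leaves \<open>f'/g'\<close> and \<open>f/g\<close>
  unchanged and negates \<open>H\<close>.\<close>
lemma ratio_shape_increasing_decreasing:
  fixes a b Ha :: ereal and f g f' g' :: "real \<Rightarrow> real" and c :: real
  assumes f_deriv: "\<And>x. x \<in> eivl a b \<Longrightarrow> (f has_real_derivative f' x) (at x)"
    and g_deriv: "\<And>x. x \<in> eivl a b \<Longrightarrow> (g has_real_derivative g' x) (at x)"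
    and f_lim: "(f \<longlongrightarrow> 0) (at_left_e b)"
    and g_lim: "(g \<longlongrightarrow> 0) (at_left_e b)"
    and H_lim: "((\<lambda>x. ereal (f' x / g' x * g x - f x)) \<longlongrightarrow> Ha) (at_right_e a)"
    and c_in: "c \<in> eivl a b"
    and r_mono: "strict_mono_on (eivl a (ereal c)) (\<lambda>x. f' x / g' x)"
    and r_antimono: "strict_antimono_on (eivl (ereal c) b) (\<lambda>x. f' x / g' x)"
  shows "(((\<forall>x\<in>eivl a b. g' x > 0) \<and> Ha \<le> 0) \<or> ((\<forall>x\<in>eivl a b. g' x < 0) \<and> Ha \<ge> 0)
           \<longrightarrow> strict_antimono_on (eivl a b) (\<lambda>x. f x / g x))
       \<and> (((\<forall>x\<in>eivl a b. g' x > 0) \<and> Ha > 0) \<or> ((\<forall>x\<in>eivl a b. g' x < 0) \<and> Ha < 0)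
           \<longrightarrow> (\<exists>!xb. xb \<in> eivl a b \<and> strict_mono_on (eivl a (ereal xb)) (\<lambda>x. f x / g x)
                  \<and> strict_antimono_on (eivl (ereal xb) b) (\<lambda>x. f x / g x)))"
proof -
  have pos: "(Ha \<le> 0 \<longrightarrow> strict_antimono_on (eivl a b) (\<lambda>x. f x / g x))
      \<and> (0 < Ha \<longrightarrow> (\<exists>!xb. xb \<in> eivl a b \<and> strict_mono_on (eivl a (ereal xb)) (\<lambda>x. f x / g x)
                  \<and> strict_antimono_on (eivl (ereal xb) b) (\<lambda>x. f x / g x)))"
    if "\<forall>x\<in>eivl a b. g' x > 0"
  proof -
    interpret unimodal_ratio a b f g f' g' c
      using assms that by unfold_locales auto
    show ?thesis
      using ratio_decreasing ratio_peak H_lim unfolding Hfg_def r_def by blast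
  qed
  have neg: "(- Ha \<le> 0 \<longrightarrow> strict_antimono_on (eivl a b) (\<lambda>x. f x / g x))
      \<and> (0 < - Ha \<longrightarrow> (\<exists>!xb. xb \<in> eivl a b \<and> strict_mono_on (eivl a (ereal xb)) (\<lambda>x. f x / g x)
                  \<and> strict_antimono_on (eivl (ereal xb) b) (\<lambda>x. f x / g x)))"
    if "\<forall>x\<in>eivl a b. g' x < 0"
  proof -
    interpret unimodal_ratio a b "\<lambda>x. - f x" "\<lambda>x. - g x" "\<lambda>x. - f' x" "\<lambda>x. - g' x" c
      using assms that tendsto_minus[OF f_lim] tendsto_minus[OF g_lim]
      by unfold_locales (auto intro: DERIV_minus)
    have "((\<lambda>x. - ereal (f' x / g' x * g x - f x)) \<longlongrightarrow> - Ha) (at_right_e a)"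
      using tendsto_uminus_ereal[OF H_lim] .
    then have "((\<lambda>x. ereal (Hfg x)) \<longlongrightarrow> - Ha) (at_right_e a)"
      unfolding Hfg_def r_def by (simp add: algebra_simps)
    then show ?thesis using ratio_decreasing ratio_peak by simp
  qed
  show ?thesis
    using pos neg by (auto simp: ereal_uminus_le_reorder ereal_uminus_less_reorder)
qed

text \<open>Part (B) of the theorem is part (A) for \<open>(-f, g)\<close>: this negates \<open>f'/g'\<close>, \<open>f/g\<close>
  and \<open>H\<close>, exchanging increase and decrease.\<close>
lemma ratio_shape_decreasing_increasing:
  fixes a b Ha :: ereal and f g f' g' :: "real \<Rightarrow> real" and c :: real
  assumes f_deriv: "\<And>x. x \<in> eivl a b \<Longrightarrow> (f has_real_derivative f' x) (at x)"
    and g_deriv: "\<And>x. x \<in> eivl a b \<Longrightarrow> (g has_real_derivative g' x) (at x)"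
    and f_lim: "(f \<longlongrightarrow> 0) (at_left_e b)"
    and g_lim: "(g \<longlongrightarrow> 0) (at_left_e b)"
    and H_lim: "((\<lambda>x. ereal (f' x / g' x * g x - f x)) \<longlongrightarrow> Ha) (at_right_e a)"
    and c_in: "c \<in> eivl a b"
    and r_antimono: "strict_antimono_on (eivl a (ereal c)) (\<lambda>x. f' x / g' x)"
    and r_mono: "strict_mono_on (eivl (ereal c) b) (\<lambda>x. f' x / g' x)"
  shows "(((\<forall>x\<in>eivl a b. g' x > 0) \<and> Ha \<ge> 0) \<or> ((\<forall>x\<in>eivl a b. g' x < 0) \<and> Ha \<le> 0)
           \<longrightarrow> strict_mono_on (eivl a b) (\<lambda>x. f x / g x))
       \<and> (((\<forall>x\<in>eivl a b. g' x > 0) \<and> Ha < 0) \<or> ((\<forall>x\<in>eivl a b. g' x < 0) \<and> Ha > 0)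
           \<longrightarrow> (\<exists>!xb. xb \<in> eivl a b \<and> strict_antimono_on (eivl a (ereal xb)) (\<lambda>x. f x / g x)
                  \<and> strict_mono_on (eivl (ereal xb) b) (\<lambda>x. f x / g x)))"
proof -
  have "((\<lambda>x. - ereal (f' x / g' x * g x - f x)) \<longlongrightarrow> - Ha) (at_right_e a)"
    using tendsto_uminus_ereal[OF H_lim] .
  then have H_lim': "((\<lambda>x. ereal (- f' x / g' x * g x - - f x)) \<longlongrightarrow> - Ha) (at_right_e a)"
    by (simp add: algebra_simps)
  have "strict_mono_on (eivl a (ereal c)) (\<lambda>x. - f' x / g' x)"
    "strict_antimono_on (eivl (ereal c) b) (\<lambda>x. - f' x / g' x)"
    using r_antimono r_mono by (simp_all add: strict_mono_on_uminus_iff strict_antimono_on_uminus_iff)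
  moreover have "\<And>x. x \<in> eivl a b \<Longrightarrow> ((\<lambda>x. - f x) has_real_derivative - f' x) (at x)"
    using f_deriv by (rule DERIV_minus)
  moreover have "((\<lambda>x. - f x) \<longlongrightarrow> 0) (at_left_e b)"
    using tendsto_minus[OF f_lim] by simp
  ultimately have "(((\<forall>x\<in>eivl a b. g' x > 0) \<and> - Ha \<le> 0) \<or> ((\<forall>x\<in>eivl a b. g' x < 0) \<and> - Ha \<ge> 0)
           \<longrightarrow> strict_antimono_on (eivl a b) (\<lambda>x. - (f x / g x)))
       \<and> (((\<forall>x\<in>eivl a b. g' x > 0) \<and> - Ha > 0) \<or> ((\<forall>x\<in>eivl a b. g' x < 0) \<and> - Ha < 0)
           \<longrightarrow> (\<exists>!xb. xb \<in> eivl a b \<and> strict_mono_on (eivl a (ereal xb)) (\<lambda>x. - (f x / g x))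
                  \<and> strict_antimono_on (eivl (ereal xb) b) (\<lambda>x. - (f x / g x))))"
    using ratio_shape_increasing_decreasing[OF _ g_deriv _ g_lim H_lim' c_in] by simp
  then show ?thesis
    by (simp add: ereal_uminus_le_reorder ereal_uminus_less_reorder
        strict_mono_on_uminus_iff strict_antimono_on_uminus_iff)
qed

theorem mainTheorem4:
  fixes a b :: ereal and f g :: "real \<Rightarrow> real" and Ha :: ereal
  assumes ab: "a < b"
    and fdiff: "\<forall>x\<in>eivl a b. f differentiable (at x)"
    and gdiff: "\<forall>x\<in>eivl a b. g differentiable (at x)"
    and g'nz: "\<forall>x\<in>eivl a b. deriv g x \<noteq> 0"
    and flim: "(f \<longlongrightarrow> 0) (at_left_e b)"
    and glim: "(g \<longlongrightarrow> 0) (at_left_e b)"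
    and Hlim: "((\<lambda>x. ereal (H f g x)) \<longlongrightarrow> Ha) (at_right_e a)"
  shows
   "((\<exists>c\<in>eivl a b. strict_mono_on (eivl a (ereal c)) (\<lambda>x. deriv f x / deriv g x)
        \<and> strict_antimono_on (eivl (ereal c) b) (\<lambda>x. deriv f x / deriv g x)) \<longrightarrow>
      ((((\<forall>x\<in>eivl a b. deriv g x > 0) \<and> Ha \<le> 0) \<or> ((\<forall>x\<in>eivl a b. deriv g x < 0) \<and> Ha \<ge> 0))
         \<longrightarrow> strict_antimono_on (eivl a b) (\<lambda>x. f x / g x))
    \<and> ((((\<forall>x\<in>eivl a b. deriv g x > 0) \<and> Ha > 0) \<or> ((\<forall>x\<in>eivl a b. deriv g x < 0) \<and> Ha < 0))
         \<longrightarrow> (\<exists>!xb. xb \<in> eivl a b \<and> strict_mono_on (eivl a (ereal xb)) (\<lambda>x. f x / g x)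
                  \<and> strict_antimono_on (eivl (ereal xb) b) (\<lambda>x. f x / g x))))
  \<and> ((\<exists>c\<in>eivl a b. strict_antimono_on (eivl a (ereal c)) (\<lambda>x. deriv f x / deriv g x)
        \<and> strict_mono_on (eivl (ereal c) b) (\<lambda>x. deriv f x / deriv g x)) \<longrightarrow>
      ((((\<forall>x\<in>eivl a b. deriv g x > 0) \<and> Ha \<ge> 0) \<or> ((\<forall>x\<in>eivl a b. deriv g x < 0) \<and> Ha \<le> 0))
         \<longrightarrow> strict_mono_on (eivl a b) (\<lambda>x. f x / g x))
    \<and> ((((\<forall>x\<in>eivl a b. deriv g x > 0) \<and> Ha < 0) \<or> ((\<forall>x\<in>eivl a b. deriv g x < 0) \<and> Ha > 0))
         \<longrightarrow> (\<exists>!xb. xb \<in> eivl a b \<and> strict_antimono_on (eivl a (ereal xb)) (\<lambda>x. f x / g x)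
                  \<and> strict_mono_on (eivl (ereal xb) b) (\<lambda>x. f x / g x))))"
proof -
  have f_deriv: "\<And>x. x \<in> eivl a b \<Longrightarrow> (f has_real_derivative deriv f x) (at x)"
    using fdiff DERIV_deriv_iff_real_differentiable by blast
  have g_deriv: "\<And>x. x \<in> eivl a b \<Longrightarrow> (g has_real_derivative deriv g x) (at x)"
    using gdiff DERIV_deriv_iff_real_differentiable by blast
  have H_lim: "((\<lambda>x. ereal (deriv f x / deriv g x * g x - f x)) \<longlongrightarrow> Ha) (at_right_e a)"
    using Hlim unfolding H_def .
  note A = ratio_shape_increasing_decreasing[OF f_deriv g_deriv flim glim H_lim]
  note B = ratio_shape_decreasing_increasing[OF f_deriv g_deriv flim glim H_lim]
  show ?thesis
    by (rule conjI; rule impI; elim bexE conjE; rule A B)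
qed

end
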